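(* Let $P,X,Y\in\Sigma^*$ and $A=PX$, $B=PY$. Then $\mathrm{MCS}(A,B)=\{PZ : Z\in\mathrm{MCS}(X,Y)\}$.
   Context: $\mathrm{MCS}(A,B)$ denotes the set of minimal common supersequences of $A$ and $B$: strings $C$ with $A$ and $B$ both (not necessarily contiguous) subsequences of $C$, such that no proper subsequence of $C$ has this property. $PX$ denotes concatenation. *)

theory Defs
  imports Main "HOL-Library.Sublist"
begin

definition common_superseq :: "'a list \<Rightarrow> 'a list \<Rightarrow> 'a list \<Rightarrow> bool" where
  "common_superseq A B C \<longleftrightarrow> subseq A C \<and> subseq B C"

definition MCS :: "'a list \<Rightarrow> 'a list \<Rightarrow> 'a list set" where
  "MCS A B = {C. common_superseq A B C \<and>
                 (\<forall>D. strict_subseq D C \<longrightarrow> \<not> common_superseq A B D)}"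

end

theory Submission
  imports Defs
begin

text \<open>By induction on the common prefix it suffices to treat one common first letter a.
  A minimal common supersequence of a#X and a#Y starts with a: otherwise its tail would be a
  smaller common supersequence. Deleting the first letter maps common supersequences of a#X, a#Y
  to common supersequences of X, Y and strict subsequences of a#C to strict subsequences of C, so a#C
  is minimal for a#X, a#Y exactly when C is minimal for X, Y.\<close>

lemma strict_subseq_Cons_tl:
  assumes "strict_subseq (d # D) (c # C)"
  shows "strict_subseq D C"
proof (cases "d = c")
  case True
  then show ?thesis using assms by (auto simp: strict_subseq_def)
next
  case False
  then have "subseq (d # D) C" using assms by (simp add: strict_subseq_def)
  then have "subseq D C" and "length D < length C"
    by (auto dest: subseq_Cons' list_emb_length)
  then show ?thesis by (auto simp: strict_subseq_def)
qed

lemma common_superseq_Cons_tl: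
  "common_superseq (a # X) (a # Y) (d # D) \<Longrightarrow> common_superseq X Y D"
  by (cases "d = a") (auto simp: common_superseq_def dest: subseq_Cons')

lemma common_superseq_Cons_Cons:
  "common_superseq X Y C \<Longrightarrow> common_superseq (a # X) (a # Y) (a # C)"
  by (simp add: common_superseq_def)

lemma MCS_Cons_Cons_hd:
  assumes "C \<in> MCS (a # X) (a # Y)"
  obtains C' where "C = a # C'"
proof -
  have super: "common_superseq (a # X) (a # Y) C"
    and minimal: "\<And>D. strict_subseq D C \<Longrightarrow> \<not> common_superseq (a # X) (a # Y) D"
    using assms by (auto simp: MCS_def)
  obtain c C' where C: "C = c # C'"
    using super by (cases C) (auto simp: common_superseq_def)
  have "c = a"
  proof (rule ccontr)
    assume "c \<noteq> a"
    then have "common_superseq (a # X) (a # Y) C'"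
      using super C by (simp add: common_superseq_def)
    moreover have "strict_subseq C' C"
      using C by (auto simp: strict_subseq_def)
    ultimately show False using minimal by blast
  qed
  with C that show ?thesis by blast
qed

lemma Cons_in_MCS_Cons_Cons_iff:
  "a # C \<in> MCS (a # X) (a # Y) \<longleftrightarrow> C \<in> MCS X Y"
proof
  assume "a # C \<in> MCS (a # X) (a # Y)"
  then have super: "common_superseq (a # X) (a # Y) (a # C)"
    and minimal: "\<And>D. strict_subseq D (a # C) \<Longrightarrow> \<not> common_superseq (a # X) (a # Y) D"
    by (simp_all add: MCS_def)
  show "C \<in> MCS X Y"
    unfolding MCS_def mem_Collect_eq
  proof (intro conjI allI impI notI)
    show "common_superseq X Y C"
      using super by (rule common_superseq_Cons_tl)
  next
    fix D assume "strict_subseq D C" and "common_superseq X Y D"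
    then have "strict_subseq (a # D) (a # C)"
      and "common_superseq (a # X) (a # Y) (a # D)"
      by (auto simp: strict_subseq_def common_superseq_Cons_Cons)
    with minimal show False by blast
  qed
next
  assume "C \<in> MCS X Y"
  then have super: "common_superseq X Y C"
    and minimal: "\<And>D. strict_subseq D C \<Longrightarrow> \<not> common_superseq X Y D"
    by (simp_all add: MCS_def)
  show "a # C \<in> MCS (a # X) (a # Y)"
    unfolding MCS_def mem_Collect_eq
  proof (intro conjI allI impI notI)
    show "common_superseq (a # X) (a # Y) (a # C)"
      using super by (rule common_superseq_Cons_Cons)
  next
    fix D assume below: "strict_subseq D (a # C)"
      and super_D: "common_superseq (a # X) (a # Y) D"
    obtain d D' where D: "D = d # D'"
      using super_D by (cases D) (auto simp: common_superseq_def)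
    have "strict_subseq D' C"
      using below unfolding D by (rule strict_subseq_Cons_tl)
    moreover have "common_superseq X Y D'"
      using super_D unfolding D by (rule common_superseq_Cons_tl)
    ultimately show False using minimal by blast
  qed
qed

lemma MCS_Cons_Cons: "MCS (a # X) (a # Y) = {a # Z | Z. Z \<in> MCS X Y}"
proof (intro set_eqI iffI)
  fix C assume C: "C \<in> MCS (a # X) (a # Y)"
  then obtain C' where "C = a # C'"
    by (rule MCS_Cons_Cons_hd)
  with C show "C \<in> {a # Z | Z. Z \<in> MCS X Y}"
    by (simp add: Cons_in_MCS_Cons_Cons_iff)
next
  fix C assume "C \<in> {a # Z | Z. Z \<in> MCS X Y}"
  then obtain Z where "C = a # Z" and "Z \<in> MCS X Y"
    by blast
  then show "C \<in> MCS (a # X) (a # Y)"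
    by (simp add: Cons_in_MCS_Cons_Cons_iff)
qed

lemma MCS_append_same_prefix: "MCS (P @ X) (P @ Y) = {P @ Z | Z. Z \<in> MCS X Y}"
proof (induction P)
  case Nil
  then show ?case by simp
next
  case (Cons a P)
  have "MCS ((a # P) @ X) ((a # P) @ Y) = {a # Z | Z. Z \<in> MCS (P @ X) (P @ Y)}"
    by (simp add: MCS_Cons_Cons)
  also have "\<dots> = {(a # P) @ Z | Z. Z \<in> MCS X Y}"
    using Cons.IH by auto
  finally show ?case .
qed

theorem mainTheorem7:
  fixes P X Y A B :: "'a list"
  assumes "A = P @ X" and "B = P @ Y"
  shows "MCS A B = {P @ Z | Z. Z \<in> MCS X Y}"
  using assms by (simp add: MCS_append_same_prefix)

end
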